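(* Let $T$ be a torus, $X$ a finite $T$-CW complex, $(t,x)\in\mathcal X^+\times\mathfrak t_{\mathbb C}$ and $a=\zeta_{T,t}(x)\in E_{T,t}$. Evaluation of loops at $(0,0)\in\mathbb T^2$ restricts to a homeomorphism \[ ev_{t,x}:L^2X^{t,x}\xrightarrow{\cong}X^a, \] natural in $X$ and equivariant with respect to the homomorphism $\nu:T/T(a)\to(\mathbb T^2\times T)/T(t,x)$ induced by the inclusion $T\hookrightarrow\mathbb T^2\times T$, $u\mapsto(0,u)$ (i.e. $ev_{t,x}(\nu(g)\cdot\gamma)=g\cdot ev_{t,x}(\gamma)$).
   Context: $\mathbb T=\mathbb R/\mathbb Z$, $T$ torus, $\check T=\mathrm{Hom}(\mathbb T,T)$, $\mathfrak t=\check T\otimes\mathbb R$, $\mathfrak t_{\mathbb C}=\check T\otimes\mathbb C$, $\pi:\mathfrak t\to T$ the quotient. $\mathcal X^+=\{(t_1,t_2)\in\mathbb C^2:\mathbb Rt_1+\mathbb Rt_2=\mathbb C,\ \mathrm{Im}(t_1/t_2)>0\}$, $E_t=\mathbb C/(\mathbb Zt_1+\mathbb Zt_2)$, $E_{T,t}=\check T\otimes E_t$, $\zeta_{T,t}:\mathfrak t_{\mathbb C}\to E_{T,t}$ the quotient. For $a\in E_{T,t}$, $T(a)$ is the intersection of all closed $H\subset T$ with $a\in\mathrm{Hom}(\hat H,E_t)\subset E_{T,t}$ (explicitly, writing $x=x_1t_1+x_2t_2$ with $x_i\in\mathfrak t$, $T(a)$ is generated by $\pi(x_1),\pi(x_2)$),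 and $X^a$ is its fixed point set. $L^2X=\mathrm{Map}(\mathbb T^2,X)$ with $\mathbb T^2\times T$ acting by $((r,u)\cdot\gamma)(s)=u\cdot\gamma(s-r)$. $T(t,x)$ is the intersection of all closed $K\subset\mathbb T^2\times T$ with $(t,x)\in\mathrm{Lie}(K)\otimes\mathbb C\subset\mathbb C^2\times\mathfrak t_{\mathbb C}$, and $L^2X^{t,x}$ is its fixed point set; one has $T(a)=T\cap T(t,x)$, so $\nu$ is well defined. $L^2X^{t,x}$ carries the induced action of $(\mathbb T^2\times T)/T(t,x)$ and $X^a$ that of $T/T(a)$. *)

theory Defs
  imports "HOL-Analysis.Analysis"
begin

text \<open>The torus T of rank CARD('n) is modelled as
  T = \<t>/\<check>T with \<t> = real^'n and cocharacter lattice \<check>T = \<int>^'n; the quotient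
  map \<pi> : \<t> \<rightarrow> T is implicit: an element of T is represented by any lift
  v :: real^'n.  \<t>_\<complex> = complex^'n.  The 2-torus \<T>^2 is (real \<times> real)/\<int>^2.
  A closed subgroup of a torus is represented by its (closed) preimage in
  the Lie algebra, i.e. a closed additive subgroup containing the lattice.\<close>

definition lat :: "(real^'n) set" where
  "lat = {v. \<forall>i. v $ i \<in> \<int>}"

definition lat2 :: "(real \<times> real) set" where
  "lat2 = {s. fst s \<in> \<int> \<and> snd s \<in> \<int>}"

definition closed_subgrp_T :: "(real^'n) set \<Rightarrow> bool" where
  "closed_subgrp_T H \<longleftrightarrow> closed H \<and> 0 \<in> H \<and> (\<forall>u\<in>H. \<forall>v\<in>H. u + v \<in> H \<and> - u \<in> H)
      \<and> lat \<subseteq> H"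

definition closed_subgrp_T2T :: "((real \<times> real) \<times> (real^'n)) set \<Rightarrow> bool" where
  "closed_subgrp_T2T K \<longleftrightarrow> closed K \<and> 0 \<in> K \<and> (\<forall>u\<in>K. \<forall>v\<in>K. u + v \<in> K \<and> - u \<in> K)
      \<and> lat2 \<times> lat \<subseteq> K"

definition lie_alg :: "((real \<times> real) \<times> (real^'n)) set \<Rightarrow> ((real \<times> real) \<times> (real^'n)) set" where
  "lie_alg K = {v. \<forall>r::real. r *\<^sub>R v \<in> K}"

text \<open>Membership of (t,x) \<in> \<complex>^2 \<times> \<t>_\<complex> in Lie(K) \<otimes> \<complex> = Lie(K) + i Lie(K).\<close>
definition in_lie_cplx :: "((real \<times> real) \<times> (real^'n)) set \<Rightarrow> complex \<times> complex \<Rightarrow> complex^'n \<Rightarrow> bool" where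
  "in_lie_cplx K t x \<longleftrightarrow> (\<exists>a\<in>lie_alg K. \<exists>b\<in>lie_alg K.
      fst t = Complex (fst (fst a)) (fst (fst b)) \<and> snd t = Complex (snd (fst a)) (snd (fst b))
      \<and> (\<forall>i. x $ i = Complex (snd a $ i) (snd b $ i)))"

definition Ttx :: "complex \<times> complex \<Rightarrow> complex^'n \<Rightarrow> ((real \<times> real) \<times> (real^'n)) set" where
  "Ttx t x = \<Inter> {K. closed_subgrp_T2T K \<and> in_lie_cplx K t x}"

definition Xplus :: "(complex \<times> complex) set" where
  "Xplus = {t. (\<forall>z. \<exists>a b::real. z = of_real a * fst t + of_real b * snd t) \<and> Im (fst t / snd t) > 0}"

text \<open>E_{T,t} = \<check>T \<otimes> E_t = \<t>_\<complex> / (\<check>T t1 + \<check>T t2); \<zeta>_{T,t}(x) is the class of x.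
  Characters of T are m \<in> \<int>^'n, \<chi>_m(\<pi> v) = m \<bullet> v mod \<int>.  The class a = \<zeta>_{T,t}(x),
  viewed as the homomorphism \<hat>T \<rightarrow> E_t, m \<mapsto> [m \<bullet> x], lies in Hom(\<hat>H, E_t) iff it
  vanishes on the characters that are trivial on H.\<close>
definition in_Hom_hatH :: "(real^'n) set \<Rightarrow> complex \<times> complex \<Rightarrow> complex^'n \<Rightarrow> bool" where
  "in_Hom_hatH H t x \<longleftrightarrow> (\<forall>m \<in> lat. (\<forall>h\<in>H. m \<bullet> h \<in> \<int>) \<longrightarrow>
      (\<exists>p\<in>\<int>. \<exists>q\<in>\<int>. (\<Sum>i\<in>UNIV. of_real (m $ i) * x $ i) = of_real p * fst t + of_real q * snd t))"

definition Ta :: "complex \<times> complex \<Rightarrow> complex^'n \<Rightarrow> (real^'n) set" where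
  "Ta t x = \<Inter> {H. closed_subgrp_T H \<and> in_Hom_hatH H t x}"

definition T_space :: "'a topology \<Rightarrow> (real^'n \<Rightarrow> 'a \<Rightarrow> 'a) \<Rightarrow> bool" where
  "T_space X act \<longleftrightarrow>
     continuous_map (prod_topology euclidean X) X (\<lambda>(v, p). act v p)
     \<and> (\<forall>p\<in>topspace X. act 0 p = p)
     \<and> (\<forall>v w. \<forall>p\<in>topspace X. act (v + w) p = act v (act w p))
     \<and> (\<forall>m\<in>lat. \<forall>p\<in>topspace X. act m p = p)"

definition disc :: "nat \<Rightarrow> (nat \<Rightarrow> real) set" where
  "disc k = {d \<in> topspace (Euclidean_space k). (\<Sum>i<k. (d i)\<^sup>2) \<le> 1}"

definition disc_bdry :: "nat \<Rightarrow> (nat \<Rightarrow> real) set" where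
  "disc_bdry k = {d \<in> topspace (Euclidean_space k). (\<Sum>i<k. (d i)\<^sup>2) = 1}"

definition disc_top :: "nat \<Rightarrow> (nat \<Rightarrow> real) topology" where
  "disc_top k = subtopology (Euclidean_space k) (disc k)"

text \<open>B \<subseteq> topspace X is obtained from A by attaching finitely many equivariant
  k-cells T/H_i \<times> D^k along T-maps T/H_i \<times> S^{k-1} \<rightarrow> A.  The i-th cell is given by
  its characteristic map (v,d) \<mapsto> \<Phi> i v d on \<t> \<times> D^k, which is T-equivariant and
  factors through T/H_i \<times> D^k; B carries the pushout (quotient) topology.\<close>
definition attach_cells ::
  "'a topology \<Rightarrow> (real^'n \<Rightarrow> 'a \<Rightarrow> 'a) \<Rightarrow> nat \<Rightarrow> 'a set \<Rightarrow> 'a set \<Rightarrow> bool" where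
  "attach_cells X act k A B \<longleftrightarrow> A \<subseteq> B \<and> B \<subseteq> topspace X \<and>
     (\<exists>(m::nat) (H :: nat \<Rightarrow> (real^'n) set) (\<Phi> :: nat \<Rightarrow> real^'n \<Rightarrow> (nat \<Rightarrow> real) \<Rightarrow> 'a).
        (\<forall>i<m. closed_subgrp_T (H i))
      \<and> (\<forall>i<m. continuous_map (prod_topology euclidean (disc_top k)) (subtopology X B)
                (\<lambda>(v, d). \<Phi> i v d))
      \<and> (\<forall>i<m. \<forall>v. \<forall>d\<in>disc k. \<Phi> i v d = act v (\<Phi> i 0 d))
      \<and> (\<forall>i<m. \<forall>h\<in>H i. \<forall>d\<in>disc k. \<Phi> i h d = \<Phi> i 0 d)
      \<and> (\<forall>i<m. \<forall>v. \<forall>d\<in>disc_bdry k. \<Phi> i v d \<in> A)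
      \<and> B = A \<union> (\<Union>i<m. (\<lambda>(v, d). \<Phi> i v d) ` (UNIV \<times> (disc k - disc_bdry k)))
      \<and> (\<forall>i<m. \<forall>v. \<forall>d\<in>disc k - disc_bdry k. \<Phi> i v d \<notin> A)
      \<and> (\<forall>i<m. \<forall>j<m. \<forall>v v'. \<forall>d\<in>disc k - disc_bdry k. \<forall>d'\<in>disc k - disc_bdry k.
            \<Phi> i v d = \<Phi> j v' d' \<longrightarrow> i = j \<and> d = d' \<and> v - v' \<in> H i)
      \<and> (\<forall>C. C \<subseteq> B \<longrightarrow>
            (closedin (subtopology X B) C \<longleftrightarrow>
               closedin (subtopology X A) (C \<inter> A)
             \<and> (\<forall>i<m. closedin (prod_topology euclidean (disc_top k))
                        {(v, d). d \<in> disc k \<and> \<Phi> i v d \<in> C}))))"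

text \<open>A finite T-CW complex: finitely many skeleta, each obtained from the previous
  one by attaching finitely many equivariant cells.  Sk 0 is the (-1)-skeleton,
  Sk (Suc k) the k-skeleton.\<close>
definition finite_T_CW :: "'a topology \<Rightarrow> (real^'n \<Rightarrow> 'a \<Rightarrow> 'a) \<Rightarrow> bool" where
  "finite_T_CW X act \<longleftrightarrow> T_space X act \<and>
     (\<exists>(N::nat) (Sk :: nat \<Rightarrow> 'a set). Sk 0 = {} \<and> Sk N = topspace X \<and>
        (\<forall>k<N. attach_cells X act k (Sk k) (Sk (Suc k))))"

text \<open>Free double loop space L^2X = Map(\<T>^2, X): continuous \<int>^2-periodic maps
  \<real>^2 \<rightarrow> X, with the compact-open topology.\<close>
definition L2 :: "'a topology \<Rightarrow> ((real \<times> real) \<Rightarrow> 'a) set" where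
  "L2 X = {\<gamma>. continuous_map euclidean X \<gamma> \<and> (\<forall>s. \<forall>m\<in>lat2. \<gamma> (s + m) = \<gamma> s)}"

definition L2_top :: "'a topology \<Rightarrow> ((real \<times> real) \<Rightarrow> 'a) topology" where
  "L2_top X = subtopology
     (topology_generated_by {{\<gamma>. \<gamma> ` K \<subseteq> U} | K U. compact K \<and> openin X U}) (L2 X)"

definition L2_act :: "(real^'n \<Rightarrow> 'a \<Rightarrow> 'a) \<Rightarrow> (real \<times> real) \<times> (real^'n)
     \<Rightarrow> ((real \<times> real) \<Rightarrow> 'a) \<Rightarrow> ((real \<times> real) \<Rightarrow> 'a)" where
  "L2_act act g \<gamma> = (\<lambda>s. act (snd g) (\<gamma> (s - fst g)))"

definition L2_fix :: "'a topology \<Rightarrow> (real^'n \<Rightarrow> 'a \<Rightarrow> 'a) \<Rightarrow> complex \<times> complex \<Rightarrow> complex^'n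
     \<Rightarrow> ((real \<times> real) \<Rightarrow> 'a) set" where
  "L2_fix X act t x = {\<gamma> \<in> L2 X. \<forall>g\<in>Ttx t x. L2_act act g \<gamma> = \<gamma>}"

definition X_fix :: "'a topology \<Rightarrow> (real^'n \<Rightarrow> 'a \<Rightarrow> 'a) \<Rightarrow> complex \<times> complex \<Rightarrow> complex^'n
     \<Rightarrow> 'a set" where
  "X_fix X act t x = {p \<in> topspace X. \<forall>u\<in>Ta t x. act u p = p}"

definition ev0 :: "((real \<times> real) \<Rightarrow> 'a) \<Rightarrow> 'a" where
  "ev0 \<gamma> = \<gamma> (0, 0)"

end

theory Submission
  imports Defs
begin

text \<open>
  Since t1, t2 is a real basis of \<complex>, we can write x = x1 t1 + x2 t2 with x1, x2 \<in> \<t>; put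
  L s = s1 x1 + s2 x2.  Pontryagin duality for closed subgroups of T (a closed subgroup is cut
  out by the characters trivial on it, which we derive from the structure of closed subgroups of
  \<real>^n) shows that T(a) is the closed subgroup generated by \<pi> x1 and \<pi> x2, and then that
  T(t,x) = {(s, L s + u) | u \<in> T(a)} is the graph of L modulo T(a).  So a double loop \<gamma> fixed
  by T(t,x) satisfies \<gamma> s = L s \<cdot> \<gamma> (0,0) with \<gamma> (0,0) \<in> X^a, and conversely every p \<in> X^a
  yields the fixed loop s \<mapsto> L s \<cdot> p.  Evaluation at (0,0) and this orbit map are mutually
  inverse; the orbit map is continuous into the compact-open topology by the tube lemma.
\<close>

section \<open>Closed subgroups of Euclidean space\<close>

definition add_subgroup :: "'a::real_vector set \<Rightarrow> bool" where
  "add_subgroup H \<longleftrightarrow> 0 \<in> H \<and> (\<forall>u\<in>H. \<forall>v\<in>H. u + v \<in> H \<and> - u \<in> H)"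

lemma add_subgroup_zero: "add_subgroup H \<Longrightarrow> 0 \<in> H"
  and add_subgroup_add: "add_subgroup H \<Longrightarrow> u \<in> H \<Longrightarrow> v \<in> H \<Longrightarrow> u + v \<in> H"
  and add_subgroup_uminus: "add_subgroup H \<Longrightarrow> u \<in> H \<Longrightarrow> - u \<in> H"
  by (auto simp: add_subgroup_def)

lemma add_subgroup_diff: "add_subgroup H \<Longrightarrow> u \<in> H \<Longrightarrow> v \<in> H \<Longrightarrow> u - v \<in> H"
  using add_subgroup_add[of H u "- v"] add_subgroup_uminus[of H v] by simp

lemma add_subgroup_Ints_scaleR:
  assumes H: "add_subgroup H" and v: "v \<in> H" and c: "c \<in> \<int>"
  shows "c *\<^sub>R v \<in> H"
proof -
  have nat: "real n *\<^sub>R v \<in> H" for n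
    by (induction n) (auto simp: add_subgroup_zero[OF H] add_subgroup_add[OF H v] algebra_simps)
  obtain k where "c = of_int k" using c Ints_cases by blast
  then consider n where "c = real n" | n where "c = - real n"
    by (metis of_int_of_nat_eq of_int_minus int_cases2)
  then show ?thesis
    by cases (use nat add_subgroup_uminus[OF H nat] in simp_all)
qed

lemma add_subgroup_sum: "add_subgroup H \<Longrightarrow> (\<And>b. b \<in> B \<Longrightarrow> f b \<in> H) \<Longrightarrow> sum f B \<in> H"
  by (induction B rule: infinite_finite_induct) (auto simp: add_subgroup_zero add_subgroup_add)

lemma add_subgroup_linear_image:
  assumes f: "linear f" and H: "add_subgroup H"
  shows "add_subgroup (f ` H)"
  unfolding add_subgroup_def
proof (intro conjI ballI)
  show "0 \<in> f ` H" using add_subgroup_zero[OF H] linear_0[OF f] by (metis image_eqI)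
  fix u v assume "u \<in> f ` H" "v \<in> f ` H"
  then obtain a b where "a \<in> H" "b \<in> H" "u = f a" "v = f b" by auto
  then show "u + v \<in> f ` H" "- u \<in> f ` H"
    using add_subgroup_add[OF H] add_subgroup_uminus[OF H] linear_add[OF f] linear_neg[OF f]
    by (metis image_eqI)+
qed

definition int_span :: "'a::real_vector set \<Rightarrow> 'a set" where
  "int_span B = {\<Sum>b\<in>B. c b *\<^sub>R b | c. \<forall>b\<in>B. c b \<in> \<int>}"

definition lattice_basis :: "'a::real_vector set \<Rightarrow> 'a set \<Rightarrow> bool" where
  "lattice_basis B H \<longleftrightarrow> finite B \<and> independent B \<and> H = int_span B"

lemma int_span_subset: "add_subgroup H \<Longrightarrow> B \<subseteq> H \<Longrightarrow> int_span B \<subseteq> H"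
  unfolding int_span_def by (auto intro!: add_subgroup_sum add_subgroup_Ints_scaleR)

lemma int_span_superset:
  assumes "finite B" shows "B \<subseteq> int_span B"
proof
  fix b0 assume "b0 \<in> B"
  have "(\<Sum>b\<in>B. (if b = b0 then 1 else 0) *\<^sub>R b) = (\<Sum>b\<in>B. if b = b0 then b else 0)"
    by (intro sum.cong) auto
  then have "b0 = (\<Sum>b\<in>B. (if b = b0 then 1 else 0) *\<^sub>R b)"
    using assms \<open>b0 \<in> B\<close> by simp
  then show "b0 \<in> int_span B" unfolding int_span_def by force
qed

lemma int_span_insert:
  assumes "finite L" "h \<notin> L" "s \<in> \<int>" "v \<in> int_span L"
  shows "s *\<^sub>R h + v \<in> int_span (insert h L)"
proof -
  obtain c where c: "v = (\<Sum>b\<in>L. c b *\<^sub>R b)" "\<forall>b\<in>L. c b \<in> \<int>"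
    using assms(4) by (auto simp: int_span_def)
  define c' where "c' = c(h := s)"
  have "(\<Sum>b\<in>L. c' b *\<^sub>R b) = v"
    using assms(2) c(1) by (auto simp: c'_def intro!: sum.cong)
  then have "(\<Sum>b\<in>insert h L. c' b *\<^sub>R b) = s *\<^sub>R h + v"
    using assms(1,2) by (simp add: c'_def)
  moreover have "\<forall>b\<in>insert h L. c' b \<in> \<int>" using c(2) assms(3) by (simp add: c'_def)
  ultimately show ?thesis unfolding int_span_def by force
qed

lemma int_span_image:
  assumes "inj_on l B" "\<forall>q\<in>B. c q \<in> \<int>"
  shows "(\<Sum>q\<in>B. c q *\<^sub>R l q) \<in> int_span (l ` B)"
proof -
  define c' where "c' = c \<circ> inv_into B l"
  have "(\<Sum>v\<in>l ` B. c' v *\<^sub>R v) = (\<Sum>q\<in>B. c q *\<^sub>R l q)"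
    using assms(1) by (simp add: sum.reindex c'_def)
  moreover have "\<forall>v\<in>l ` B. c' v \<in> \<int>" using assms by (auto simp: c'_def)
  ultimately show ?thesis unfolding int_span_def by force
qed

lemma independent_if_independent_image:
  assumes Q: "linear Q" and L: "independent (Q ` L)" "inj_on Q L"
  shows "independent L"
proof
  assume "dependent L"
  then obtain a where a: "a \<in> L" "a \<in> span (L - {a})" by (auto simp: dependent_def)
  have "Q a \<in> Q ` span (L - {a})" using a(2) by (rule imageI)
  also have "\<dots> = span (Q ` (L - {a}))" by (rule span_linear_image[OF Q, symmetric])
  also have "Q ` (L - {a}) = Q ` L - {Q a}"
    using inj_on_image_set_diff[OF L(2), of L "{a}"] a(1) by simp
  finally show False using L(1) a(1) unfolding dependent_def by blast
qed

lemma independent_insert_kernel: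
  fixes Q :: "'a::euclidean_space \<Rightarrow> 'b::euclidean_space"
  assumes Q: "linear Q" and L: "finite L" "independent (Q ` L)" "inj_on Q L"
    and h: "Q h = 0" "h \<noteq> 0"
  shows "independent (insert h L)" and "h \<notin> L"
proof -
  have "h \<notin> span L" using linear_indep_image_lemma[OF Q L _ h(1)] h(2) by blast
  then show "independent (insert h L)" "h \<notin> L"
    using independent_insertI independent_if_independent_image[OF Q L(2,3)] span_base by blast+
qed

definition orth_proj :: "'a::real_inner \<Rightarrow> 'a \<Rightarrow> 'a" where
  "orth_proj w v = v - (v \<bullet> w / (w \<bullet> w)) *\<^sub>R w"

lemma linear_orth_proj: "linear (orth_proj w)"
  by (rule linearI) (auto simp: orth_proj_def inner_add_left algebra_simps add_divide_distrib)

lemma orth_proj_orthogonal: "w \<noteq> 0 \<Longrightarrow> orth_proj w v \<bullet> w = 0"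
  by (simp add: orth_proj_def inner_diff_left)

lemma orth_proj_self: "orth_proj w w = 0"
  by (cases "w = 0") (auto simp: orth_proj_def)

lemma orth_proj_decomp: "v = orth_proj w v + (v \<bullet> w / (w \<bullet> w)) *\<^sub>R w"
  by (simp add: orth_proj_def)

lemma orth_proj_eq_0_iff: "orth_proj w v = 0 \<longleftrightarrow> v = (v \<bullet> w / (w \<bullet> w)) *\<^sub>R w"
  by (simp add: orth_proj_def)

lemma dim_less_if_orthogonal:
  fixes S H :: "'a::euclidean_space set"
  assumes "S \<subseteq> span H" "w \<in> span H" "w \<noteq> 0" "\<And>v. v \<in> S \<Longrightarrow> v \<bullet> w = 0"
  shows "dim S < dim H"
proof -
  have "subspace {v::'a. v \<bullet> w = 0}"
    by (auto simp: subspace_def inner_add_left)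
  then have "span S \<subseteq> {v. v \<bullet> w = 0}" using assms(4) by (intro span_minimal) auto
  then have "w \<notin> span S" using assms(3) by auto
  moreover have "span S \<subseteq> span H" using assms(1) by (metis span_mono span_span)
  ultimately have "span S \<subset> span H" using assms(2) by blast
  then show ?thesis by (rule dim_psubset)
qed

definition discrete_subgroup :: "'a::real_normed_vector set \<Rightarrow> bool" where
  "discrete_subgroup H \<longleftrightarrow> add_subgroup H \<and> (\<exists>e>0. \<forall>h\<in>H. h \<noteq> 0 \<longrightarrow> e \<le> norm h)"

lemma discrete_subgroup_finite_cball:
  fixes H :: "'a::euclidean_space set"
  assumes "discrete_subgroup H"
  shows "finite (H \<inter> cball 0 R)"
proof (rule ccontr)
  obtain e where H: "add_subgroup H" and e: "e > 0" "\<And>h. h \<in> H \<Longrightarrow> h \<noteq> 0 \<Longrightarrow> e \<le> norm h"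
    using assms by (auto simp: discrete_subgroup_def)
  assume "infinite (H \<inter> cball 0 R)"
  then obtain x where x: "x islimpt (H \<inter> cball 0 R)"
    using compact_eq_Bolzano_Weierstrass[of "cball (0::'a) R"] by auto
  then obtain a where a: "a \<in> H" "a \<noteq> x" "dist a x < e/2"
    using e(1) unfolding islimpt_approachable by (metis IntD1 half_gt_zero)
  then obtain b where b: "b \<in> H" "b \<noteq> x" "dist b x < dist a x"
    using x unfolding islimpt_approachable by (metis IntD1 zero_less_dist_iff)
  have "norm (a - b) < e"
    using a b dist_triangle2[of a b x] by (simp add: dist_norm)
  moreover have "a - b \<in> H" "a - b \<noteq> 0" using a b add_subgroup_diff[OF H] by auto
  ultimately show False using e(2) by force
qed

lemma discrete_subgroup_primitive_element:
  fixes H :: "'a::euclidean_space set"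
  assumes H: "discrete_subgroup H" and h0: "h0 \<in> H" "h0 \<noteq> 0"
  obtains h where "h \<in> H" "h \<noteq> 0" "\<And>c. c *\<^sub>R h \<in> H \<Longrightarrow> c \<in> \<int>"
proof -
  have G: "add_subgroup H" using H by (simp add: discrete_subgroup_def)
  define L where "L = {c::real. c *\<^sub>R h0 \<in> H \<and> 0 < c \<and> c \<le> 1}"
  have "(\<lambda>c. c *\<^sub>R h0) ` L \<subseteq> H \<inter> cball 0 (norm h0)"
    by (auto simp: L_def intro!: mult_left_le_one_le)
  moreover have "inj_on (\<lambda>c. c *\<^sub>R h0) L" using h0(2) by (auto intro!: inj_onI)
  ultimately have finL: "finite L"
    using discrete_subgroup_finite_cball[OF H] finite_subset finite_imageD by metis
  have "1 \<in> L" using h0 by (simp add: L_def)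
  define c0 where "c0 = Min L"
  have c0L: "c0 \<in> L" using finL \<open>1 \<in> L\<close> unfolding c0_def by (metis Min_in empty_iff)
  have c0min: "c0 \<le> c" if "c \<in> L" for c using finL that by (simp add: c0_def)
  define h where "h = c0 *\<^sub>R h0"
  have hH: "h \<in> H" and "h \<noteq> 0" using c0L h0 by (auto simp: L_def h_def)
  moreover have "c \<in> \<int>" if ch: "c *\<^sub>R h \<in> H" for c
  proof (rule ccontr)
    assume "c \<notin> \<int>"
    then have f: "0 < frac c" "frac c < 1" by (simp_all add: frac_gt_0_iff frac_lt_1)
    have "frac c *\<^sub>R h = c *\<^sub>R h - of_int \<lfloor>c\<rfloor> *\<^sub>R h"
      by (simp add: frac_def scaleR_diff_left)
    also have "\<dots> \<in> H"
      by (intro add_subgroup_diff[OF G ch] add_subgroup_Ints_scaleR[OF G hH]) simp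
    finally have "(frac c * c0) *\<^sub>R h0 \<in> H" by (simp add: h_def)
    moreover have "frac c * c0 \<le> c0" using f c0L by (intro mult_left_le_one_le) (auto simp: L_def)
    moreover have "0 < frac c * c0" "c0 \<le> 1" using f c0L by (auto simp: L_def)
    ultimately have "frac c * c0 \<in> L" unfolding L_def by simp
    then show False using c0min f c0L by (force simp: L_def)
  qed
  ultimately show thesis using that by blast
qed

lemma discrete_subgroup_orth_proj:
  fixes H :: "'a::euclidean_space set"
  assumes H: "discrete_subgroup H" and h: "h \<in> H"
  shows "discrete_subgroup (orth_proj h ` H)"
proof -
  let ?Q = "orth_proj h"
  have G: "add_subgroup H" using H by (simp add: discrete_subgroup_def)
  define F where "F = H \<inter> cball 0 (1 + norm h)"
  define E where "E = insert 1 ((\<lambda>d. norm (?Q d)) ` {d\<in>F. ?Q d \<noteq> 0})"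
  have "finite F" using discrete_subgroup_finite_cball[OF H] by (simp add: F_def)
  then have finE: "finite E" by (simp add: E_def)
  have "Min E > 0" using finE by (subst Min_gr_iff) (auto simp: E_def)
  moreover have "Min E \<le> norm q" if q: "q \<in> ?Q ` H" "q \<noteq> 0" for q
  proof (cases "norm q < 1")
    case False
    have "Min E \<le> 1" by (rule Min_le[OF finE]) (simp add: E_def)
    then show ?thesis using False by simp
  next
    case True
    obtain d where d: "d \<in> H" "q = ?Q d" using q(1) by blast
    define s where "s = d \<bullet> h / (h \<bullet> h)"
    \<comment> \<open>Translating d by an integer multiple of h leaves q unchanged and makes d short.\<close>
    define d' where "d' = d - of_int \<lfloor>s\<rfloor> *\<^sub>R h"
    have d'H: "d' \<in> H" unfolding d'_def
      by (intro add_subgroup_diff[OF G d(1)] add_subgroup_Ints_scaleR[OF G h]) simp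
    have Qd': "?Q d' = q"
      using d(2) linear_orth_proj[of h] by (simp add: d'_def linear_diff linear_scale orth_proj_self)
    have "d' = ?Q d + frac s *\<^sub>R h"
      using orth_proj_decomp[of d h] by (simp add: d'_def s_def frac_def algebra_simps)
    then have "norm d' \<le> norm q + frac s * norm h"
      using d(2) norm_triangle_ineq[of "?Q d" "frac s *\<^sub>R h"] by simp
    also have "\<dots> \<le> 1 + norm h"
      using True mult_right_mono[OF less_imp_le[OF frac_lt_1[of s]] norm_ge_zero[of h]] by simp
    finally have "norm q \<in> E" using d'H Qd' q(2) by (auto simp: E_def F_def)
    then show ?thesis using finE by simp
  qed
  ultimately show ?thesis
    using add_subgroup_linear_image[OF linear_orth_proj G] by (auto simp: discrete_subgroup_def)
qed

lemma lattice_basis_lift: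
  fixes H :: "'a::euclidean_space set"
  assumes H: "add_subgroup H" and h: "h \<in> H" "h \<noteq> 0" "\<And>c. c *\<^sub>R h \<in> H \<Longrightarrow> c \<in> \<int>"
    and B': "lattice_basis B' (orth_proj h ` H)"
  shows "\<exists>B. lattice_basis B H"
proof -
  let ?Q = "orth_proj h"
  have finB': "finite B'" and indB': "independent B'" and H': "?Q ` H = int_span B'"
    using B' by (auto simp: lattice_basis_def)
  have "\<forall>q\<in>B'. \<exists>d\<in>H. ?Q d = q" using int_span_superset[OF finB'] H' by (metis imageE subsetD)
  then obtain l where l: "\<And>q. q \<in> B' \<Longrightarrow> l q \<in> H" "\<And>q. q \<in> B' \<Longrightarrow> ?Q (l q) = q" by metis
  have inj_l: "inj_on l B'" using l(2) by (metis inj_onI)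
  have Ql: "?Q ` l ` B' = B'" using l(2) by (force simp: image_image)
  have inj_Q: "inj_on ?Q (l ` B')" using l(2) by (auto intro!: inj_onI)
  define B where "B = insert h (l ` B')"
  have indB: "independent B" and hl: "h \<notin> l ` B'"
    using independent_insert_kernel[OF linear_orth_proj _ _ inj_Q orth_proj_self h(2)] finB' Ql indB'
    by (simp_all add: B_def)
  have "H \<subseteq> int_span B"
  proof
    fix d assume d: "d \<in> H"
    obtain c where c: "\<forall>q\<in>B'. c q \<in> \<int>" "?Q d = (\<Sum>q\<in>B'. c q *\<^sub>R q)"
      using d H' by (auto simp: int_span_def)
    define v where "v = (\<Sum>q\<in>B'. c q *\<^sub>R l q)"
    have vH: "v \<in> H"
      unfolding v_def using c(1) l(1) by (intro add_subgroup_sum[OF H] add_subgroup_Ints_scaleR[OF H]) auto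
    have "?Q v = (\<Sum>q\<in>B'. c q *\<^sub>R q)"
      using l(2) linear_orth_proj[of h] by (simp add: v_def linear_sum linear_scale)
    then have "?Q (d - v) = 0" using c(2) linear_orth_proj[of h] by (simp add: linear_diff)
    then obtain s where s: "d - v = s *\<^sub>R h" by (metis orth_proj_eq_0_iff)
    have "s \<in> \<int>" using h(3) add_subgroup_diff[OF H d vH] s by simp
    moreover have "v \<in> int_span (l ` B')" unfolding v_def by (rule int_span_image[OF inj_l c(1)])
    ultimately have "s *\<^sub>R h + v \<in> int_span B"
      unfolding B_def using finB' hl by (intro int_span_insert) auto
    moreover have "d = s *\<^sub>R h + v" using s by (simp add: algebra_simps)
    ultimately show "d \<in> int_span B" by simp
  qed
  moreover have "int_span B \<subseteq> H" using h(1) l(1) by (intro int_span_subset[OF H]) (auto simp: B_def)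
  ultimately have "lattice_basis B H" using finB' indB by (auto simp: lattice_basis_def B_def)
  then show ?thesis by blast
qed

lemma discrete_subgroup_lattice_basis:
  fixes H :: "'a::euclidean_space set"
  assumes "discrete_subgroup H"
  shows "\<exists>B. lattice_basis B H"
  using assms
proof (induction "dim H" arbitrary: H rule: less_induct)
  case less
  have G: "add_subgroup H" using less.prems by (simp add: discrete_subgroup_def)
  show ?case
  proof (cases "H = {0}")
    case True
    then show ?thesis by (intro exI[of _ "{}"]) (simp add: lattice_basis_def int_span_def independent_empty)
  next
    case False
    then obtain h0 where "h0 \<in> H" "h0 \<noteq> 0" using add_subgroup_zero[OF G] by blast
    then obtain h where h: "h \<in> H" "h \<noteq> 0" "\<And>c. c *\<^sub>R h \<in> H \<Longrightarrow> c \<in> \<int>"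
      using discrete_subgroup_primitive_element[OF less.prems] by metis
    have "dim (orth_proj h ` H) < dim H"
    proof (rule dim_less_if_orthogonal)
      show "orth_proj h ` H \<subseteq> span H"
        unfolding orth_proj_def using h(1) by (blast intro: span_diff span_scale span_base)
      show "h \<in> span H" using h(1) by (rule span_base)
    qed (use h(2) orth_proj_orthogonal in auto)
    then obtain B' where "lattice_basis B' (orth_proj h ` H)"
      using less.hyps discrete_subgroup_orth_proj[OF less.prems h(1)] by blast
    then show ?thesis using lattice_basis_lift[OF G h] by blast
  qed
qed

lemma linear_lincomb:
  assumes "linear \<phi>"
  shows "\<phi> (\<Sum>b\<in>B. c b *\<^sub>R b) = (\<Sum>b\<in>B. c b * \<phi> b)"
  by (simp add: linear_sum[OF assms] linear_scale[OF assms])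

lemma lattice_basis_separation:
  fixes H :: "'a::euclidean_space set"
  assumes B: "lattice_basis B H" and y: "y \<notin> H"
  shows "\<exists>\<phi>::'a \<Rightarrow> real. linear \<phi> \<and> (\<forall>h\<in>H. \<phi> h \<in> \<int>) \<and> \<phi> y \<notin> \<int>"
proof -
  have finB: "finite B" and indB: "independent B" and H: "H = int_span B"
    using B by (auto simp: lattice_basis_def)
  show ?thesis
  proof (cases "y \<in> span B")
    case False
    then have "independent (insert y B)" and "y \<notin> B"
      using independent_insertI[OF _ indB] by (auto intro: span_base)
    then obtain \<phi> :: "'a \<Rightarrow> real" where \<phi>: "linear \<phi>" "\<phi> y = 1/2" "\<And>b. b \<in> B \<Longrightarrow> \<phi> b = 0"
      using linear_independent_extend[of "insert y B" "\<lambda>v. if v = y then 1/2 else 0"] by force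
    have "\<phi> h = 0" if "h \<in> H" for h
      using that \<phi>(3) by (auto simp: H int_span_def linear_lincomb[OF \<phi>(1)])
    moreover have "(1/2::real) \<notin> \<int>"
      using frac_eq[of "1/2::real"] frac_eq_0_iff[of "1/2::real"] by simp
    then have "\<phi> y \<notin> \<int>" unfolding \<phi>(2) .
    ultimately show ?thesis using \<phi>(1) by auto
  next
    case True
    then obtain u where u: "y = (\<Sum>b\<in>B. u b *\<^sub>R b)" unfolding span_finite[OF finB] by blast
    then obtain b0 where b0: "b0 \<in> B" "u b0 \<notin> \<int>" using y by (auto simp: H int_span_def)
    obtain \<phi> :: "'a \<Rightarrow> real" where \<phi>: "linear \<phi>" "\<And>b. b \<in> B \<Longrightarrow> \<phi> b = (if b = b0 then 1 else 0)"
      using linear_independent_extend[OF indB, of "\<lambda>b. if b = b0 then 1 else 0"] by blast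
    have coord: "\<phi> (\<Sum>b\<in>B. c b *\<^sub>R b) = c b0" for c
    proof -
      have "\<phi> (\<Sum>b\<in>B. c b *\<^sub>R b) = (\<Sum>b\<in>B. if b = b0 then c b else 0)"
        unfolding linear_lincomb[OF \<phi>(1)] using \<phi>(2) by (intro sum.cong) auto
      also have "\<dots> = c b0" using b0(1) finB by simp
      finally show ?thesis .
    qed
    have "\<forall>h\<in>H. \<phi> h \<in> \<int>" using b0(1) by (auto simp: H int_span_def coord)
    moreover have "\<phi> y \<notin> \<int>" using b0(2) by (simp add: u coord)
    ultimately show ?thesis using \<phi>(1) by blast
  qed
qed

text \<open>c l is the limit of the multiples \<lfloor>c / norm (h k)\<rfloor> h k in H.\<close>
lemma closed_subgroup_limit_direction:
  fixes H :: "'a::real_normed_vector set"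
  assumes cl: "closed H" and H: "add_subgroup H"
    and h: "\<And>k. h k \<in> H" "\<And>k. h k \<noteq> 0" "h \<longlonglongrightarrow> 0"
    and l: "(\<lambda>k. (1 / norm (h k)) *\<^sub>R h k) \<longlonglongrightarrow> l"
  shows "c *\<^sub>R l \<in> H"
proof -
  define a where "a k = c / norm (h k)" for k
  define z where "z k = of_int \<lfloor>a k\<rfloor> *\<^sub>R h k" for k
  have z: "z k = c *\<^sub>R ((1 / norm (h k)) *\<^sub>R h k) - frac (a k) *\<^sub>R h k" for k
    using h(2)[of k] by (simp add: z_def a_def frac_def scaleR_diff_left)
  have "(\<lambda>k. frac (a k) *\<^sub>R h k) \<longlonglongrightarrow> 0"
  proof (rule Lim_null_comparison[OF always_eventually tendsto_norm_zero[OF h(3)]])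
    show "\<forall>k. norm (frac (a k) *\<^sub>R h k) \<le> norm (h k)"
      by (simp add: mult_left_le_one_le less_imp_le[OF frac_lt_1])
  qed
  then have "z \<longlonglongrightarrow> c *\<^sub>R l - 0"
    unfolding z[abs_def] using l by (intro tendsto_diff tendsto_scaleR tendsto_const)
  moreover have "z k \<in> H" for k by (simp add: z_def add_subgroup_Ints_scaleR[OF H h(1)])
  ultimately show ?thesis using closed_sequentially[OF cl] by auto
qed

lemma closed_subgroup_line_or_discrete:
  fixes H :: "'a::euclidean_space set"
  assumes cl: "closed H" and H: "add_subgroup H"
  shows "(\<exists>w. w \<noteq> 0 \<and> (\<forall>r. r *\<^sub>R w \<in> H)) \<or> discrete_subgroup H"
proof (rule disjCI)
  assume "\<not> discrete_subgroup H"
  then have small: "\<exists>h\<in>H. h \<noteq> 0 \<and> norm h < e" if "e > 0" for e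
    using H that by (force simp: discrete_subgroup_def not_le)
  obtain h where h: "\<And>k. h k \<in> H" "\<And>k. h k \<noteq> 0" "\<And>k. norm (h k) < 1 / Suc k"
    using small[of "1 / Suc _"] by (metis of_nat_0_less_iff zero_less_Suc zero_less_divide_1_iff)
  have "h \<longlonglongrightarrow> 0"
  proof (rule Lim_null_comparison)
    show "\<forall>\<^sub>F k in sequentially. norm (h k) \<le> 1 / Suc k" using h(3) by (simp add: less_imp_le)
    show "(\<lambda>k. 1 / real (Suc k)) \<longlonglongrightarrow> 0"
      using LIMSEQ_inverse_real_of_nat by (simp add: inverse_eq_divide)
  qed
  define u where "u k = (1 / norm (h k)) *\<^sub>R h k" for k
  have "\<forall>k. u k \<in> sphere 0 1" using h(2) by (simp add: u_def)
  then obtain l r where l: "l \<in> sphere 0 1" "strict_mono r" "(u \<circ> r) \<longlonglongrightarrow> l"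
    using compact_sphere[THEN compact_imp_seq_compact, THEN seq_compactE] by metis
  have "c *\<^sub>R l \<in> H" for c
  proof (rule closed_subgroup_limit_direction[OF cl H])
    show "(h \<circ> r) \<longlonglongrightarrow> 0" using LIMSEQ_subseq_LIMSEQ[OF \<open>h \<longlonglongrightarrow> 0\<close> l(2)] .
    show "(\<lambda>k. (1 / norm ((h \<circ> r) k)) *\<^sub>R (h \<circ> r) k) \<longlonglongrightarrow> l" using l(3) by (simp add: u_def o_def)
  qed (use h in auto)
  moreover have "l \<noteq> 0" using l(1) by auto
  ultimately show "\<exists>w. w \<noteq> 0 \<and> (\<forall>r. r *\<^sub>R w \<in> H)" by blast
qed

lemma closed_subgroup_separation:
  fixes H :: "'a::euclidean_space set"
  assumes "closed H" "add_subgroup H" "y \<notin> H"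
  shows "\<exists>\<phi>::'a \<Rightarrow> real. linear \<phi> \<and> (\<forall>h\<in>H. \<phi> h \<in> \<int>) \<and> \<phi> y \<notin> \<int>"
  using assms
proof (induction "dim H" arbitrary: H y rule: less_induct)
  case less
  note cl = less.prems(1) and H = less.prems(2) and y = less.prems(3)
  from closed_subgroup_line_or_discrete[OF cl H] show ?case
  proof
    assume "\<exists>w. w \<noteq> 0 \<and> (\<forall>r. r *\<^sub>R w \<in> H)"
    then obtain w where w: "w \<noteq> 0" "\<And>r. r *\<^sub>R w \<in> H" by blast
    let ?Q = "orth_proj w"
    define H' where "H' = H \<inter> {v. v \<bullet> w = 0}"
    have QH: "?Q d \<in> H'" if "d \<in> H" for d
      using add_subgroup_diff[OF H that w(2)] orth_proj_orthogonal[OF w(1)] by (simp add: H'_def orth_proj_def)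
    have cl': "closed H'" unfolding H'_def by (intro closed_Int cl closed_hyperplane[of w 0, simplified inner_commute])
    have H': "add_subgroup H'" using H by (auto simp: add_subgroup_def H'_def inner_add_left)
    have "dim H' < dim H"
      by (rule dim_less_if_orthogonal[of _ _ w]) (use w(1) w(2)[of 1] in \<open>auto simp: H'_def intro: span_base\<close>)
    moreover have "?Q y \<notin> H'"
    proof
      assume "?Q y \<in> H'"
      then have "?Q y + (y \<bullet> w / (w \<bullet> w)) *\<^sub>R w \<in> H" using add_subgroup_add[OF H] w(2) by (simp add: H'_def)
      with y show False using orth_proj_decomp[of y w] by simp
    qed
    ultimately obtain \<phi> :: "'a \<Rightarrow> real" where \<phi>: "linear \<phi>" "\<forall>h\<in>H'. \<phi> h \<in> \<int>" "\<phi> (?Q y) \<notin> \<int>"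
      using less.hyps cl' H' by blast
    then show ?thesis using QH linear_compose[OF linear_orth_proj \<phi>(1)] by (metis comp_apply)
  next
    assume "discrete_subgroup H"
    then show ?thesis using discrete_subgroup_lattice_basis lattice_basis_separation y by metis
  qed
qed

section \<open>The subgroups T(a) and T(t,x)\<close>

lemma linear_eq_inner_Basis:
  fixes \<phi> :: "'a::euclidean_space \<Rightarrow> real"
  assumes "linear \<phi>"
  shows "\<phi> v = (\<Sum>b\<in>Basis. \<phi> b *\<^sub>R b) \<bullet> v"
proof -
  have "\<phi> v = \<phi> (\<Sum>b\<in>Basis. (v \<bullet> b) *\<^sub>R b)" by (simp add: euclidean_representation)
  also have "\<dots> = (\<Sum>b\<in>Basis. \<phi> b * (b \<bullet> v))"
    by (simp add: linear_lincomb[OF assms] inner_commute mult.commute)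
  also have "\<dots> = (\<Sum>b\<in>Basis. \<phi> b *\<^sub>R b) \<bullet> v" by (simp add: inner_sum_left)
  finally show ?thesis .
qed

lemma closed_subgrp_TD: "closed_subgrp_T H \<Longrightarrow> closed H \<and> add_subgroup H \<and> lat \<subseteq> H"
  by (simp add: closed_subgrp_T_def add_subgroup_def)

lemma closed_subgrp_T_Inter: "(\<And>H. H \<in> \<H> \<Longrightarrow> closed_subgrp_T H) \<Longrightarrow> closed_subgrp_T (\<Inter>\<H>)"
  unfolding closed_subgrp_T_def by (intro conjI closed_Inter) blast+

lemma closed_subgrp_T2T_Inter: "(\<And>K. K \<in> \<K> \<Longrightarrow> closed_subgrp_T2T K) \<Longrightarrow> closed_subgrp_T2T (\<Inter>\<K>)"
  unfolding closed_subgrp_T2T_def by (intro conjI closed_Inter) blast+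

lemma closed_subgrp_T_slice:
  fixes K :: "((real \<times> real) \<times> (real^'n)) set"
  assumes K: "closed_subgrp_T2T K"
  shows "closed_subgrp_T {v. ((0, 0), v) \<in> K}"
  unfolding closed_subgrp_T_def
proof (intro conjI ballI subsetI)
  have "closed ((\<lambda>v. ((0::real, 0::real), v)) -` K)"
    using K unfolding closed_subgrp_T2T_def by (intro continuous_closed_vimage) (auto intro!: continuous_intros)
  then show "closed {v. ((0, 0), v) \<in> K}" by (simp add: vimage_def)
  show "0 \<in> {v. ((0, 0), v) \<in> K}" using K by (simp add: closed_subgrp_T2T_def zero_prod_def)
  fix v w assume "v \<in> {v. ((0, 0), v) \<in> K}" "w \<in> {v. ((0, 0), v) \<in> K}"
  then have "((0, 0), v) + ((0, 0), w) \<in> K" "- ((0, 0), v) \<in> K"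
    using K unfolding closed_subgrp_T2T_def by blast+
  then show "v + w \<in> {v. ((0, 0), v) \<in> K}" "- v \<in> {v. ((0, 0), v) \<in> K}" by simp_all
next
  fix l :: "real^'n" assume "l \<in> lat"
  then show "l \<in> {v. ((0, 0), v) \<in> K}" using K by (auto simp: closed_subgrp_T2T_def lat2_def)
qed

lemma closed_subgrp_T_character_separation:
  fixes H :: "(real^'n) set"
  assumes H: "closed_subgrp_T H" and y: "y \<notin> H"
  obtains m where "m \<in> lat" "\<And>h. h \<in> H \<Longrightarrow> m \<bullet> h \<in> \<int>" "m \<bullet> y \<notin> \<int>"
proof -
  obtain \<phi> :: "real^'n \<Rightarrow> real" where \<phi>: "linear \<phi>" "\<forall>h\<in>H. \<phi> h \<in> \<int>" "\<phi> y \<notin> \<int>"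
    using closed_subgroup_separation y closed_subgrp_TD[OF H] by blast
  define m where "m = (\<Sum>b\<in>Basis. \<phi> b *\<^sub>R b)"
  have m: "\<phi> v = m \<bullet> v" for v unfolding m_def by (rule linear_eq_inner_Basis[OF \<phi>(1)])
  have "m $ i \<in> \<int>" for i
  proof -
    have "axis i 1 \<in> H" using H by (auto simp: closed_subgrp_T_def lat_def axis_def)
    then have "\<phi> (axis i 1) \<in> \<int>" using \<phi>(2) by blast
    moreover have "\<phi> (axis i 1) = m $ i" using m[of "axis i 1"] by (simp add: inner_axis)
    ultimately show ?thesis by simp
  qed
  then have "m \<in> lat" by (simp add: lat_def)
  moreover have "m \<bullet> h \<in> \<int>" if "h \<in> H" for h using \<phi>(2) that m by metis
  moreover have "m \<bullet> y \<notin> \<int>" using \<phi>(3) m by metis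
  ultimately show thesis by (rule that)
qed

definition re_part :: "complex \<times> complex \<Rightarrow> complex^'n \<Rightarrow> (real \<times> real) \<times> (real^'n)" where
  "re_part t x = ((Re (fst t), Re (snd t)), \<chi> i. Re (x $ i))"

definition im_part :: "complex \<times> complex \<Rightarrow> complex^'n \<Rightarrow> (real \<times> real) \<times> (real^'n)" where
  "im_part t x = ((Im (fst t), Im (snd t)), \<chi> i. Im (x $ i))"

lemma in_lie_cplx_iff: "in_lie_cplx K t x \<longleftrightarrow> re_part t x \<in> lie_alg K \<and> im_part t x \<in> lie_alg K"
proof -
  have "fst t = Complex (fst (fst a)) (fst (fst b)) \<and> snd t = Complex (snd (fst a)) (snd (fst b))
      \<and> (\<forall>i. x $ i = Complex (snd a $ i) (snd b $ i)) \<longleftrightarrow> a = re_part t x \<and> b = im_part t x" for a b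
    by (auto simp: re_part_def im_part_def complex_eq_iff prod_eq_iff vec_eq_iff)
  then show ?thesis unfolding in_lie_cplx_def by auto
qed

lemma lie_alg_subset: "lie_alg K \<subseteq> K"
proof
  fix v assume "v \<in> lie_alg K"
  then have "1 *\<^sub>R v \<in> K" unfolding lie_alg_def by blast
  then show "v \<in> K" by simp
qed

lemma lie_alg_lincomb:
  assumes "closed_subgrp_T2T K" "a \<in> lie_alg K" "b \<in> lie_alg K"
  shows "\<alpha> *\<^sub>R a + \<beta> *\<^sub>R b \<in> lie_alg K"
  unfolding lie_alg_def mem_Collect_eq
proof
  fix r :: real
  have "(r * \<alpha>) *\<^sub>R a \<in> K" "(r * \<beta>) *\<^sub>R b \<in> K" using assms(2,3) by (auto simp: lie_alg_def)
  then have "(r * \<alpha>) *\<^sub>R a + (r * \<beta>) *\<^sub>R b \<in> K" using assms(1) by (auto simp: closed_subgrp_T2T_def)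
  then show "r *\<^sub>R (\<alpha> *\<^sub>R a + \<beta> *\<^sub>R b) \<in> K" by (simp add: scaleR_add_right)
qed

locale elliptic_coordinates =
  fixes t :: "complex \<times> complex" and x :: "complex^'n" and x1 x2 :: "real^'n"
  assumes det_nonzero: "Re (fst t) * Im (snd t) - Im (fst t) * Re (snd t) \<noteq> 0"
    and x_eq: "\<And>i. x $ i = of_real (x1 $ i) * fst t + of_real (x2 $ i) * snd t"
begin

definition xmap :: "real \<times> real \<Rightarrow> real^'n" where
  "xmap s = fst s *\<^sub>R x1 + snd s *\<^sub>R x2"

lemma linear_xmap: "linear xmap"
  by (rule linearI) (simp_all add: xmap_def scaleR_add_left scaleR_add_right)

lemma real_combination_eq_0:
  assumes "of_real a * fst t + of_real b * snd t = 0"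
  shows "a = 0 \<and> b = 0"
proof -
  define D where "D = Re (fst t) * Im (snd t) - Im (fst t) * Re (snd t)"
  have r: "a * Re (fst t) + b * Re (snd t) = 0" and i: "a * Im (fst t) + b * Im (snd t) = 0"
    using arg_cong[OF assms, of Re] arg_cong[OF assms, of Im] by simp_all
  have "a * D = Im (snd t) * (a * Re (fst t) + b * Re (snd t)) - Re (snd t) * (a * Im (fst t) + b * Im (snd t))"
    by (simp add: D_def algebra_simps)
  then have "a * D = 0" using r i by simp
  have "b * D = Re (fst t) * (a * Im (fst t) + b * Im (snd t)) - Im (fst t) * (a * Re (fst t) + b * Re (snd t))"
    by (simp add: D_def algebra_simps)
  then have "b * D = 0" using r i by simp
  then show ?thesis using \<open>a * D = 0\<close> det_nonzero by (simp add: D_def)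
qed

lemma character_pairing:
  "(\<Sum>i\<in>UNIV. of_real (m $ i) * x $ i) = of_real (m \<bullet> x1) * fst t + of_real (m \<bullet> x2) * snd t"
proof -
  have "(\<Sum>i\<in>UNIV. of_real (m $ i) * x $ i)
      = (\<Sum>i\<in>UNIV. of_real (m $ i * x1 $ i) * fst t + of_real (m $ i * x2 $ i) * snd t)"
    by (simp add: x_eq algebra_simps)
  also have "\<dots> = of_real (\<Sum>i\<in>UNIV. m $ i * x1 $ i) * fst t + of_real (\<Sum>i\<in>UNIV. m $ i * x2 $ i) * snd t"
    by (simp add: sum.distrib sum_distrib_right)
  finally show ?thesis by (simp add: inner_vec_def)
qed

lemma in_Hom_hatH_iff:
  assumes H: "closed_subgrp_T H"
  shows "in_Hom_hatH H t x \<longleftrightarrow> x1 \<in> H \<and> x2 \<in> H"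
proof
  assume hom: "in_Hom_hatH H t x"
  show "x1 \<in> H \<and> x2 \<in> H"
  proof (rule ccontr)
    assume "\<not> (x1 \<in> H \<and> x2 \<in> H)"
    then obtain y where y: "y \<notin> H" "y = x1 \<or> y = x2" by blast
    obtain m where m: "m \<in> lat" "\<And>h. h \<in> H \<Longrightarrow> m \<bullet> h \<in> \<int>" "m \<bullet> y \<notin> \<int>"
      using closed_subgrp_T_character_separation[OF H y(1)] by blast
    obtain p q where pq: "p \<in> \<int>" "q \<in> \<int>"
        "(\<Sum>i\<in>UNIV. of_real (m $ i) * x $ i) = of_real p * fst t + of_real q * snd t"
      using hom m(1,2) unfolding in_Hom_hatH_def by blast
    have "of_real (m \<bullet> x1 - p) * fst t + of_real (m \<bullet> x2 - q) * snd t = 0"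
      using pq(3) character_pairing[of m] by (simp add: algebra_simps)
    then have "m \<bullet> x1 - p = 0 \<and> m \<bullet> x2 - q = 0" by (rule real_combination_eq_0)
    then show False using y m(3) pq(1,2) by auto
  qed
next
  assume "x1 \<in> H \<and> x2 \<in> H"
  then show "in_Hom_hatH H t x"
    unfolding in_Hom_hatH_def using character_pairing by blast
qed

lemma Ta_eq: "Ta t x = \<Inter> {H. closed_subgrp_T H \<and> x1 \<in> H \<and> x2 \<in> H}"
  unfolding Ta_def using in_Hom_hatH_iff by metis

lemma closed_subgrp_T_Ta: "closed_subgrp_T (Ta t x)"
  unfolding Ta_eq by (rule closed_subgrp_T_Inter) blast

lemma xmap_lat2_in_Ta: "m \<in> lat2 \<Longrightarrow> xmap m \<in> Ta t x"
  using closed_subgrp_TD[OF closed_subgrp_T_Ta] unfolding xmap_def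
  by (intro add_subgroup_add add_subgroup_Ints_scaleR) (auto simp: Ta_eq lat2_def)

lemma re_part_eq: "re_part t x = ((Re (fst t), Re (snd t)), xmap (Re (fst t), Re (snd t)))"
  and im_part_eq: "im_part t x = ((Im (fst t), Im (snd t)), xmap (Im (fst t), Im (snd t)))"
  by (simp_all add: re_part_def im_part_def xmap_def x_eq vec_eq_iff mult.commute)

text \<open>Cramer's rule.\<close>
lemma real_pair_coords:
  obtains \<alpha> \<beta> where "s = \<alpha> *\<^sub>R (Re (fst t), Re (snd t)) + \<beta> *\<^sub>R (Im (fst t), Im (snd t))"
proof
  define D where "D = Re (fst t) * Im (snd t) - Im (fst t) * Re (snd t)"
  define \<alpha> where "\<alpha> = (fst s * Im (snd t) - snd s * Im (fst t)) / D"
  define \<beta> where "\<beta> = (snd s * Re (fst t) - fst s * Re (snd t)) / D"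
  have "\<alpha> * Re (fst t) + \<beta> * Im (fst t) = (fst s * D) / D"
    and "\<alpha> * Re (snd t) + \<beta> * Im (snd t) = (snd s * D) / D"
    by (simp_all add: \<alpha>_def \<beta>_def D_def add_divide_distrib[symmetric] algebra_simps)
  then show "s = \<alpha> *\<^sub>R (Re (fst t), Re (snd t)) + \<beta> *\<^sub>R (Im (fst t), Im (snd t))"
    using det_nonzero by (simp add: D_def prod_eq_iff)
qed

lemma graph_in_lie_alg:
  assumes K: "closed_subgrp_T2T K" and L: "in_lie_cplx K t x"
  shows "(s, xmap s) \<in> lie_alg K"
proof -
  obtain \<alpha> \<beta> where s: "s = \<alpha> *\<^sub>R (Re (fst t), Re (snd t)) + \<beta> *\<^sub>R (Im (fst t), Im (snd t))"
    by (rule real_pair_coords)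
  have "(s, xmap s) = \<alpha> *\<^sub>R re_part t x + \<beta> *\<^sub>R im_part t x"
    unfolding re_part_eq im_part_eq s by (simp add: xmap_def algebra_simps)
  also have "\<dots> \<in> lie_alg K" using L by (intro lie_alg_lincomb[OF K]) (simp_all add: in_lie_cplx_iff)
  finally show ?thesis .
qed

lemma graph_in_Ttx: "(s, xmap s) \<in> Ttx t x"
  unfolding Ttx_def using graph_in_lie_alg lie_alg_subset by blast

lemma Ta_in_Ttx:
  assumes u: "u \<in> Ta t x"
  shows "((0, 0), u) \<in> Ttx t x"
  unfolding Ttx_def
proof
  fix K assume "K \<in> {K. closed_subgrp_T2T K \<and> in_lie_cplx K t x}"
  then have K: "closed_subgrp_T2T K" and L: "in_lie_cplx K t x" by auto
  have "((1, 0), x1) \<in> K" "((0, 1), x2) \<in> K"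
    using lie_alg_subset graph_in_lie_alg[OF K L, of "(1, 0)"] graph_in_lie_alg[OF K L, of "(0, 1)"]
    by (auto simp: xmap_def)
  moreover have "- ((1, 0), 0) \<in> K" "- ((0, 1), 0) \<in> K"
    using K by (auto simp: closed_subgrp_T2T_def lat2_def lat_def)
  ultimately have "((1, 0), x1) + - ((1, 0), 0) \<in> K" "((0, 1), x2) + - ((0, 1), 0) \<in> K"
    using K unfolding closed_subgrp_T2T_def by blast+
  then have "Ta t x \<subseteq> {v. ((0, 0), v) \<in> K}"
    using closed_subgrp_T_slice[OF K] by (auto simp: Ta_eq)
  then show "((0, 0), u) \<in> K" using u by blast
qed

lemma closed_subgrp_T2T_graph:
  assumes A: "closed_subgrp_T A" "\<And>m. m \<in> lat2 \<Longrightarrow> xmap m \<in> A"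
  shows "closed_subgrp_T2T {g. snd g - xmap (fst g) \<in> A}"
proof -
  have G: "closed A" "add_subgroup A" "lat \<subseteq> A" using closed_subgrp_TD[OF A(1)] by auto
  define dev where "dev g = snd g - xmap (fst g)" for g :: "(real \<times> real) \<times> (real^'n)"
  have lin: "linear dev"
    unfolding dev_def[abs_def]
    using linear_compose_sub[OF linear_snd linear_compose[OF linear_fst linear_xmap]] by (simp add: o_def)
  have "closed_subgrp_T2T {g. dev g \<in> A}"
    unfolding closed_subgrp_T2T_def
  proof (intro conjI ballI subsetI)
    show "closed {g. dev g \<in> A}"
      using continuous_closed_vimage[OF G(1) linear_continuous_at[OF lin[unfolded linear_conv_bounded_linear]]]
      by (simp add: vimage_def)
    show "0 \<in> {g. dev g \<in> A}" using add_subgroup_zero[OF G(2)] by (simp add: linear_0[OF lin])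
    fix u v assume "u \<in> {g. dev g \<in> A}" "v \<in> {g. dev g \<in> A}"
    then show "u + v \<in> {g. dev g \<in> A}" "- u \<in> {g. dev g \<in> A}"
      by (simp_all add: linear_add[OF lin] linear_neg[OF lin] add_subgroup_add[OF G(2)] add_subgroup_uminus[OF G(2)])
  next
    fix k :: "(real \<times> real) \<times> (real^'n)" assume "k \<in> lat2 \<times> lat"
    then show "k \<in> {g. dev g \<in> A}"
      using G(3) A(2) by (auto simp: dev_def intro!: add_subgroup_diff[OF G(2)])
  qed
  then show ?thesis by (simp add: dev_def)
qed

lemma Ttx_eq: "Ttx t x = {g. snd g - xmap (fst g) \<in> Ta t x}" (is "_ = ?K")
proof -
  have "closed_subgrp_T2T ?K" by (rule closed_subgrp_T2T_graph[OF closed_subgrp_T_Ta xmap_lat2_in_Ta])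
  moreover have "in_lie_cplx ?K t x"
    unfolding in_lie_cplx_iff re_part_eq im_part_eq lie_alg_def
    using closed_subgrp_TD[OF closed_subgrp_T_Ta] linear_xmap
    by (auto simp: linear_scale scaleR_right_diff_distrib add_subgroup_zero)
  ultimately have "Ttx t x \<subseteq> ?K" unfolding Ttx_def by blast
  moreover have "?K \<subseteq> Ttx t x"
  proof
    have Ttx: "closed_subgrp_T2T (Ttx t x)" unfolding Ttx_def by (rule closed_subgrp_T2T_Inter) blast
    fix g assume "g \<in> ?K"
    then have "(fst g, xmap (fst g)) + ((0, 0), snd g - xmap (fst g)) \<in> Ttx t x"
      using Ttx graph_in_Ttx Ta_in_Ttx unfolding closed_subgrp_T2T_def by blast
    then show "g \<in> Ttx t x" by (simp flip: zero_prod_def)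
  qed
  ultimately show ?thesis by blast
qed

end

lemma Xplus_elliptic_coordinates:
  assumes "t \<in> Xplus"
  obtains x1 x2 where "elliptic_coordinates t x x1 x2"
proof -
  have span: "\<forall>z. \<exists>a b::real. z = of_real a * fst t + of_real b * snd t"
    and im: "Im (fst t / snd t) > 0" using assms by (auto simp: Xplus_def)
  have "Re (fst t) * Im (snd t) - Im (fst t) * Re (snd t) \<noteq> 0"
    using im by (auto simp: Im_divide)
  moreover have "\<forall>i. \<exists>c::real \<times> real. x $ i = of_real (fst c) * fst t + of_real (snd c) * snd t"
  proof
    fix i
    obtain a b where "x $ i = of_real a * fst t + of_real b * snd t" using span by blast
    then show "\<exists>c::real \<times> real. x $ i = of_real (fst c) * fst t + of_real (snd c) * snd t"
      by (intro exI[of _ "(a, b)"]) simp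
  qed
  then have "\<exists>c. \<forall>i. x $ i = of_real (fst (c i)) * fst t + of_real (snd (c i)) * snd t"
    by (rule choice)
  then obtain c where "\<And>i. x $ i = of_real (fst (c i)) * fst t + of_real (snd (c i)) * snd t"
    by blast
  ultimately have "elliptic_coordinates t x (\<chi> i. fst (c i)) (\<chi> i. snd (c i))"
    by unfold_locales simp_all
  then show thesis by (rule that)
qed

section \<open>Double loops fixed by T(t,x)\<close>

lemma L2_top_topspace: "topspace (L2_top X) = L2 X"
proof -
  have "UNIV \<in> {{\<gamma>::real \<times> real \<Rightarrow> 'a. \<gamma> ` K \<subseteq> U} | K U. compact K \<and> openin X U}"
    by (rule CollectI, rule exI[of _ "{}"], rule exI[of _ "{}"]) auto
  then have "\<Union> {{\<gamma>::real \<times> real \<Rightarrow> 'a. \<gamma> ` K \<subseteq> U} | K U. compact K \<and> openin X U} = UNIV" by blast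
  then show ?thesis by (simp add: L2_top_def)
qed

lemma continuous_map_L2_eval: "continuous_map (L2_top X) X (\<lambda>\<gamma>. \<gamma> s)"
  unfolding continuous_map_def L2_top_topspace
proof (intro conjI allI impI)
  show "(\<lambda>\<gamma>. \<gamma> s) \<in> L2 X \<rightarrow> topspace X"
    unfolding L2_def using continuous_map_image_subset_topspace by fastforce
  fix U assume "openin X U"
  moreover have "compact {s}" by simp
  ultimately have "openin (topology_generated_by {{\<gamma>. \<gamma> ` K \<subseteq> U} | K U. compact K \<and> openin X U}) {\<gamma>. \<gamma> ` {s} \<subseteq> U}"
    by (intro topology_generated_by_Basis) blast
  then have "openin (L2_top X) (L2 X \<inter> {\<gamma>. \<gamma> ` {s} \<subseteq> U})"
    unfolding L2_top_def by (rule openin_subtopology_Int2)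
  moreover have "{\<gamma> \<in> L2 X. \<gamma> s \<in> U} = L2 X \<inter> {\<gamma>. \<gamma> ` {s} \<subseteq> U}" by auto
  ultimately show "openin (L2_top X) {\<gamma> \<in> L2 X. \<gamma> s \<in> U}" by simp
qed

text \<open>One half of the exponential law for the compact-open topology; the tube lemma does the work.\<close>
lemma continuous_map_compact_open_curry:
  fixes f :: "'s::topological_space \<Rightarrow> 'x \<Rightarrow> 'y"
  assumes f: "continuous_map (prod_topology euclidean X) Y (\<lambda>(s, p). f s p)"
  shows "continuous_map X (topology_generated_by {{\<gamma>. \<gamma> ` K \<subseteq> U} | K U. compact K \<and> openin Y U})
           (\<lambda>p s. f s p)"
proof (rule continuous_on_generated_topo)
  have "UNIV \<in> {{\<gamma>::'s \<Rightarrow> 'y. \<gamma> ` K \<subseteq> U} | K U. compact K \<and> openin Y U}"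
    by (rule CollectI, rule exI[of _ "{}"], rule exI[of _ "{}"]) auto
  then show "(\<lambda>p s. f s p) ` topspace X \<subseteq> \<Union> {{\<gamma>. \<gamma> ` K \<subseteq> U} | K U. compact K \<and> openin Y U}"
    by blast
  fix W assume "W \<in> {{\<gamma>::'s \<Rightarrow> 'y. \<gamma> ` K \<subseteq> U} | K U. compact K \<and> openin Y U}"
  then obtain K V where W: "W = {\<gamma>. \<gamma> ` K \<subseteq> V}" and K: "compact K" and V: "openin Y V" by blast
  let ?P = "(\<lambda>p s. f s p) -` W \<inter> topspace X"
  show "openin X ?P"
  proof (subst openin_subopen, intro ballI)
    fix p assume p: "p \<in> ?P"
    define N where "N = {z \<in> topspace (prod_topology euclidean X). (\<lambda>(s, p). f s p) z \<in> V}"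
    have "openin (prod_topology euclidean X) N"
      unfolding N_def by (rule openin_continuous_map_preimage[OF f V])
    moreover have "compactin euclidean K" using K by (simp add: compactin_euclidean_iff)
    moreover have "K \<times> {p} \<subseteq> N" using p W by (auto simp: N_def)
    ultimately obtain U1 V1 where UV: "openin X V1" "K \<subseteq> U1" "p \<in> V1" "U1 \<times> V1 \<subseteq> N"
      using tube_lemma_left[of euclidean X N K p] p by blast
    have "V1 \<subseteq> ?P"
    proof
      fix q assume q: "q \<in> V1"
      have "f s q \<in> V" if "s \<in> K" for s
      proof -
        have "(s, q) \<in> N" using UV(2,4) q that by blast
        then show ?thesis by (simp add: N_def)
      qed
      then show "q \<in> ?P" using q openin_subset[OF UV(1)] W by auto
    qed
    then show "\<exists>T. openin X T \<and> p \<in> T \<and> T \<subseteq> ?P" using UV(1,3) by blast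
  qed
qed

lemma T_space_continuous: "T_space X act \<Longrightarrow> continuous_map (prod_topology euclidean X) X (\<lambda>(v, p). act v p)"
  and T_space_act_zero: "T_space X act \<Longrightarrow> p \<in> topspace X \<Longrightarrow> act 0 p = p"
  and T_space_act_add: "T_space X act \<Longrightarrow> p \<in> topspace X \<Longrightarrow> act (v + w) p = act v (act w p)"
  by (simp_all add: T_space_def)

lemma L2_fix_map:
  assumes f: "continuous_map X Y f" "\<And>u p. p \<in> topspace X \<Longrightarrow> f (act u p) = actY u (f p)"
    and \<gamma>: "\<gamma> \<in> L2_fix X act t x"
  shows "f \<circ> \<gamma> \<in> L2_fix Y actY t x"
proof -
  have cont: "continuous_map euclidean X \<gamma>" and fixed: "\<And>g. g \<in> Ttx t x \<Longrightarrow> L2_act act g \<gamma> = \<gamma>"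
    and per: "\<forall>s. \<forall>m\<in>lat2. \<gamma> (s + m) = \<gamma> s" using \<gamma> by (auto simp: L2_fix_def L2_def)
  have "\<gamma> s \<in> topspace X" for s using continuous_map_image_subset_topspace[OF cont] by auto
  then have "L2_act actY g (f \<circ> \<gamma>) = f \<circ> L2_act act g \<gamma>" for g
    by (simp add: L2_act_def f(2) fun_eq_iff)
  then show ?thesis
    using continuous_map_compose[OF cont f(1)] per fixed by (simp add: L2_fix_def L2_def)
qed

locale loop_evaluation =
  fixes X :: "'a topology" and act :: "real^'n \<Rightarrow> 'a \<Rightarrow> 'a"
    and L :: "real \<times> real \<Rightarrow> real^'n" and A :: "(real^'n) set"
  assumes T_space: "T_space X act" and linear_L: "linear L"
    and zero_in_A: "0 \<in> A" and L_lat2: "\<And>m. m \<in> lat2 \<Longrightarrow> L m \<in> A"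
begin

definition fixed_loops :: "(real \<times> real \<Rightarrow> 'a) set" where
  "fixed_loops = {\<gamma> \<in> L2 X. \<forall>g\<in>{g. snd g - L (fst g) \<in> A}. L2_act act g \<gamma> = \<gamma>}"

definition fixed_points :: "'a set" where
  "fixed_points = {p \<in> topspace X. \<forall>u\<in>A. act u p = p}"

definition orbit_loop :: "'a \<Rightarrow> real \<times> real \<Rightarrow> 'a" where
  "orbit_loop p = (\<lambda>s. act (L s) p)"

lemma continuous_map_act_L: "continuous_map (prod_topology euclidean X) X (\<lambda>(s, p). act (L s) p)"
proof -
  have "continuous_map euclidean euclidean L"
    using linear_continuous_on[OF linear_L[unfolded linear_conv_bounded_linear]]
    by (simp add: continuous_map_iff_continuous2)
  then have "continuous_map (prod_topology euclidean X) euclidean (L \<circ> fst)"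
    by (rule continuous_map_compose[OF continuous_map_fst])
  then have "continuous_map (prod_topology euclidean X) (prod_topology euclidean X) (\<lambda>(s, p). (L s, p))"
    unfolding continuous_map_pairwise using continuous_map_snd by (simp add: o_def case_prod_unfold)
  from continuous_map_compose[OF this T_space_continuous[OF T_space]] show ?thesis
    by (simp add: o_def case_prod_unfold)
qed

lemma fixed_loopsD: "\<gamma> \<in> fixed_loops \<Longrightarrow> snd g - L (fst g) \<in> A \<Longrightarrow> L2_act act g \<gamma> = \<gamma>"
  unfolding fixed_loops_def by blast

lemma fixed_loop_eq_orbit_loop:
  assumes "\<gamma> \<in> fixed_loops"
  shows "orbit_loop (ev0 \<gamma>) = \<gamma>"
proof
  fix s
  have "L2_act act (s, L s) \<gamma> s = \<gamma> s" using fixed_loopsD[OF assms, of "(s, L s)"] zero_in_A by simp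
  then show "orbit_loop (ev0 \<gamma>) s = \<gamma> s" by (simp add: orbit_loop_def ev0_def L2_act_def zero_prod_def)
qed

lemma ev0_fixed_loop:
  assumes "\<gamma> \<in> fixed_loops"
  shows "ev0 \<gamma> \<in> fixed_points"
proof -
  have "continuous_map euclidean X \<gamma>" using assms by (simp add: fixed_loops_def L2_def)
  then have "ev0 \<gamma> \<in> topspace X" using continuous_map_image_subset_topspace by (force simp: ev0_def)
  moreover have "act u (ev0 \<gamma>) = ev0 \<gamma>" if "u \<in> A" for u
  proof -
    have "L2_act act ((0, 0), u) \<gamma> (0, 0) = \<gamma> (0, 0)"
      using fixed_loopsD[OF assms, of "((0, 0), u)"] that linear_0[OF linear_L] by (simp add: zero_prod_def)
    then show ?thesis by (simp add: ev0_def L2_act_def zero_prod_def)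
  qed
  ultimately show ?thesis by (simp add: fixed_points_def)
qed

lemma orbit_loop_fixed:
  assumes p: "p \<in> fixed_points"
  shows "orbit_loop p \<in> fixed_loops"
proof -
  have pX: "p \<in> topspace X" and pA: "\<And>u. u \<in> A \<Longrightarrow> act u p = p"
    using p by (auto simp: fixed_points_def)
  have "continuous_map euclidean (prod_topology euclidean X) (\<lambda>s. (s, p))"
    using pX by (simp add: continuous_map_pairwise o_def)
  from continuous_map_compose[OF this continuous_map_act_L]
  have "continuous_map euclidean X (orbit_loop p)" by (simp add: orbit_loop_def o_def)
  moreover have "orbit_loop p (s + m) = orbit_loop p s" if "m \<in> lat2" for s m
    using pA[OF L_lat2[OF that]] by (simp add: orbit_loop_def linear_add[OF linear_L] T_space_act_add[OF T_space pX])
  moreover have "L2_act act g (orbit_loop p) = orbit_loop p" if "snd g - L (fst g) \<in> A" for g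
  proof
    fix s
    have "L2_act act g (orbit_loop p) s = act (snd g + L (s - fst g)) p"
      by (simp add: L2_act_def orbit_loop_def T_space_act_add[OF T_space pX])
    also have "snd g + L (s - fst g) = L s + (snd g - L (fst g))" by (simp add: linear_diff[OF linear_L])
    also have "act (L s + (snd g - L (fst g))) p = act (L s) p"
      using pA[OF that] by (simp add: T_space_act_add[OF T_space pX])
    finally show "L2_act act g (orbit_loop p) s = orbit_loop p s" by (simp add: orbit_loop_def)
  qed
  ultimately show ?thesis by (simp add: fixed_loops_def L2_def)
qed

lemma homeomorphic_map_ev0:
  "homeomorphic_map (subtopology (L2_top X) fixed_loops) (subtopology X fixed_points) ev0"
proof -
  let ?CO = "topology_generated_by {{\<gamma>. \<gamma> ` K \<subseteq> U} | K U. compact K \<and> openin X U}"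
  have loops: "fixed_loops \<subseteq> L2 X" and points: "fixed_points \<subseteq> topspace X"
    by (auto simp: fixed_loops_def fixed_points_def)
  have "continuous_map (subtopology (L2_top X) fixed_loops) (subtopology X fixed_points) ev0"
    unfolding continuous_map_in_subtopology
    using continuous_map_from_subtopology[OF continuous_map_L2_eval] ev0_fixed_loop
    by (auto simp: ev0_def[abs_def])
  moreover have "continuous_map (subtopology X fixed_points) (subtopology (L2_top X) fixed_loops) orbit_loop"
  proof -
    have "continuous_map X ?CO orbit_loop"
      using continuous_map_compact_open_curry[OF continuous_map_act_L] by (simp add: orbit_loop_def[abs_def])
    moreover have eq: "subtopology (L2_top X) fixed_loops = subtopology ?CO fixed_loops"
      using loops by (simp add: L2_top_def subtopology_subtopology inf.absorb2)
    ultimately show ?thesis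
      unfolding eq continuous_map_in_subtopology using orbit_loop_fixed points
      by (simp add: continuous_map_from_subtopology image_subset_iff)
  qed
  moreover have "orbit_loop (ev0 \<gamma>) = \<gamma>" if "\<gamma> \<in> fixed_loops" for \<gamma>
    using that by (rule fixed_loop_eq_orbit_loop)
  moreover have "ev0 (orbit_loop p) = p" if "p \<in> fixed_points" for p
    using that points by (auto simp: ev0_def orbit_loop_def linear_0[OF linear_L] zero_prod_def[symmetric]
        T_space_act_zero[OF T_space])
  ultimately have "homeomorphic_maps (subtopology (L2_top X) fixed_loops) (subtopology X fixed_points) ev0 orbit_loop"
    using loops points by (auto simp: homeomorphic_maps_def L2_top_topspace inf.absorb2)
  then show ?thesis unfolding homeomorphic_map_maps by blast
qed

end

theorem mainTheorem16:
  fixes X :: "'a topology" and act :: "real^'n \<Rightarrow> 'a \<Rightarrow> 'a"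
    and Y :: "'b topology" and actY :: "real^'n \<Rightarrow> 'b \<Rightarrow> 'b"
    and t :: "complex \<times> complex" and x :: "complex^'n"
  assumes "finite_T_CW X act" and "finite_T_CW Y actY"
    and "t \<in> Xplus"
  shows "homeomorphic_map (subtopology (L2_top X) (L2_fix X act t x))
            (subtopology X (X_fix X act t x)) ev0
       \<and> (\<forall>u::real^'n. \<forall>\<gamma>\<in>L2_fix X act t x.
            ev0 (L2_act act ((0, 0), u) \<gamma>) = act u (ev0 \<gamma>))
       \<and> (\<forall>f. continuous_map X Y f \<and> (\<forall>u. \<forall>p\<in>topspace X. f (act u p) = actY u (f p)) \<longrightarrow>
            (\<forall>\<gamma>\<in>L2_fix X act t x. f \<circ> \<gamma> \<in> L2_fix Y actY t x \<and> ev0 (f \<circ> \<gamma>) = f (ev0 \<gamma>)))"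
proof -
  have X: "T_space X act" using assms(1) by (simp add: finite_T_CW_def)
  obtain x1 x2 where "elliptic_coordinates t x x1 x2"
    using Xplus_elliptic_coordinates[OF assms(3)] .
  then interpret elliptic_coordinates t x x1 x2 .
  interpret loop_evaluation X act xmap "Ta t x"
    using X linear_xmap xmap_lat2_in_Ta closed_subgrp_TD[OF closed_subgrp_T_Ta]
    by (simp add: loop_evaluation_def add_subgroup_zero)
  have "L2_fix X act t x = fixed_loops" and "X_fix X act t x = fixed_points"
    by (simp_all add: L2_fix_def fixed_loops_def X_fix_def fixed_points_def Ttx_eq)
  then have "homeomorphic_map (subtopology (L2_top X) (L2_fix X act t x))
      (subtopology X (X_fix X act t x)) ev0"
    using homeomorphic_map_ev0 by simp
  moreover have "ev0 (L2_act act ((0, 0), u) \<gamma>) = act u (ev0 \<gamma>)" for u \<gamma>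
    by (simp add: ev0_def L2_act_def zero_prod_def)
  moreover have "f \<circ> \<gamma> \<in> L2_fix Y actY t x \<and> ev0 (f \<circ> \<gamma>) = f (ev0 \<gamma>)"
    if "continuous_map X Y f" "\<forall>u. \<forall>p\<in>topspace X. f (act u p) = actY u (f p)"
      and "\<gamma> \<in> L2_fix X act t x" for f \<gamma>
  proof -
    have "f \<circ> \<gamma> \<in> L2_fix Y actY t x" using that(2) by (intro L2_fix_map[OF that(1) _ that(3)]) blast
    then show ?thesis by (simp add: ev0_def)
  qed
  ultimately show ?thesis by blast
qed

end
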